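(* Assume (H3)–(H7). If $d_\phi=d$, the functions $\widetilde\Psi_1,\widetilde\Psi_2$ are linearly independent (rank 2). If $1\le d_\phi\le d-1$, the functions $\widehat\Psi_1,\widehat\Psi_2$ are linearly independent (rank 2).
   Context: $\phi\in C^2(\mathbb R^d)$, $\rho=e^{-\phi}$, with (H3) $\int\rho=1$, $\int x\rho=0$; (H4) $\forall\varepsilon\,\exists C_\varepsilon$: $|\nabla^2\phi|\le\varepsilon|\nabla\phi|^2+C_\varepsilon$; (H5) Poincaré inequality for $\rho$; (H6) $\int(|x|^4+|\phi|^2+|\nabla\phi|^4)\rho<\infty$; (H7) $\int\nabla^2\phi\,\rho=\mathrm{Id}$. $\langle\varphi\rangle=\int\varphi\rho\,dx$; $\xi_2=|x|^2-\langle|x|^2\rangle$, $\xi_\phi=\phi-\langle\phi\rangle$. $\Phi(x)=\nabla\phi(x)-x$; $\Psi_1(x)=\frac{2\xi_\phi(x)+\nabla\phi(x)\cdot x-d}{\sqrt{2d}}-x\cdot\frac{\langle\nabla^2\phi\,x\rangle}{\sqrt{2d}}$; $\Psi_2(x)=\frac{\xi_2(x)}{2\sqrt{2d}}$. $E_\phi=\mathrm{Span}\{\nabla\phi(x)-x:x\in\mathbb R^d\}$, $d_\phi=\dim E_\phi$; coordinates are chosen with $E_\phi=\mathrm{Span}\{e_1,\dots,e_{d_\phi}\}$, so $\Phi=(\widehat\Phi,0)$. If $d_\phi=d$: $M_\phi=\langle\Phi\otimes\Phi\rangle$ (invertible), $\alpha_i=\langle\Psi_i\Phi\rangle$, $\widetilde\Psi_i=\Psi_i-\Phi\cdot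 M_\phi^{-1}\alpha_i$. If $1\le d_\phi\le d-1$: $\widehat M_\phi=\langle\widehat\Phi\otimes\widehat\Phi\rangle$ (invertible), $\hat\alpha_i=\langle\Psi_i\widehat\Phi\rangle$, $\widehat\Psi_i=\Psi_i-\widehat\Phi\cdot\widehat M_\phi^{-1}\hat\alpha_i$. *)

theory Defs
  imports "HOL-Analysis.Analysis"
begin

definition rho :: "(real^'n::finite \<Rightarrow> real) \<Rightarrow> real^'n \<Rightarrow> real" where
  "rho \<phi> x = exp (- \<phi> x)"

definition avg :: "(real^'n::finite \<Rightarrow> real) \<Rightarrow> (real^'n \<Rightarrow> 'b::{banach,second_countable_topology}) \<Rightarrow> 'b" where
  "avg \<phi> f = integral\<^sup>L lborel (\<lambda>x. rho \<phi> x *\<^sub>R f x)"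

definition C2_with :: "(real^'n::finite \<Rightarrow> real) \<Rightarrow> (real^'n \<Rightarrow> real^'n) \<Rightarrow> (real^'n \<Rightarrow> real^'n^'n) \<Rightarrow> bool" where
  "C2_with \<phi> g H \<longleftrightarrow>
     (\<forall>x. (\<phi> has_derivative (\<lambda>h. g x \<bullet> h)) (at x)) \<and>
     (\<forall>x. (g has_derivative (\<lambda>h. H x *v h)) (at x)) \<and>
     continuous_on UNIV H"

definition H3 :: "(real^'n::finite \<Rightarrow> real) \<Rightarrow> bool" where
  "H3 \<phi> \<longleftrightarrow> has_bochner_integral lborel (rho \<phi>) 1 \<and>
                has_bochner_integral lborel (\<lambda>x. rho \<phi> x *\<^sub>R x) 0"

definition H4 :: "(real^'n::finite \<Rightarrow> real^'n) \<Rightarrow> (real^'n \<Rightarrow> real^'n^'n) \<Rightarrow> bool" where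
  "H4 g H \<longleftrightarrow> (\<forall>\<epsilon>>0. \<exists>C. \<forall>x. norm (H x) \<le> \<epsilon> * (norm (g x))\<^sup>2 + C)"

definition H5 :: "(real^'n::finite \<Rightarrow> real) \<Rightarrow> bool" where
  "H5 \<phi> \<longleftrightarrow> (\<exists>C. \<forall>(f :: real^'n \<Rightarrow> real) Df.
      (\<forall>x. (f has_derivative (\<lambda>h. Df x \<bullet> h)) (at x)) \<and> continuous_on UNIV Df \<and>
      integrable lborel (\<lambda>x. (f x)\<^sup>2 * rho \<phi> x) \<and>
      integrable lborel (\<lambda>x. (norm (Df x))\<^sup>2 * rho \<phi> x) \<longrightarrow>
      avg \<phi> (\<lambda>x. (f x - avg \<phi> f)\<^sup>2) \<le> C * avg \<phi> (\<lambda>x. (norm (Df x))\<^sup>2))"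

definition H6 :: "(real^'n::finite \<Rightarrow> real) \<Rightarrow> (real^'n \<Rightarrow> real^'n) \<Rightarrow> bool" where
  "H6 \<phi> g \<longleftrightarrow> integrable lborel
      (\<lambda>x. ((norm x)^4 + (\<phi> x)\<^sup>2 + (norm (g x))^4) * rho \<phi> x)"

definition H7 :: "(real^'n::finite \<Rightarrow> real) \<Rightarrow> (real^'n \<Rightarrow> real^'n^'n) \<Rightarrow> bool" where
  "H7 \<phi> H \<longleftrightarrow> has_bochner_integral lborel (\<lambda>x. rho \<phi> x *\<^sub>R H x) (mat 1)"

definition hyps :: "(real^'n::finite \<Rightarrow> real) \<Rightarrow> (real^'n \<Rightarrow> real^'n) \<Rightarrow> (real^'n \<Rightarrow> real^'n^'n) \<Rightarrow> bool" where
  "hyps \<phi> g H \<longleftrightarrow> C2_with \<phi> g H \<and> H3 \<phi> \<and> H4 g H \<and> H5 \<phi> \<and> H6 \<phi> g \<and> H7 \<phi> H"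

definition Phi :: "(real^'n::finite \<Rightarrow> real^'n) \<Rightarrow> real^'n \<Rightarrow> real^'n" where
  "Phi g x = g x - x"

definition E_phi :: "(real^'n::finite \<Rightarrow> real^'n) \<Rightarrow> (real^'n) set" where
  "E_phi g = span (range (Phi g))"

definition d_phi :: "(real^'n::finite \<Rightarrow> real^'n) \<Rightarrow> nat" where
  "d_phi g = dim (E_phi g)"

definition Psi1 :: "(real^'n::finite \<Rightarrow> real) \<Rightarrow> (real^'n \<Rightarrow> real^'n) \<Rightarrow> (real^'n \<Rightarrow> real^'n^'n) \<Rightarrow> real^'n \<Rightarrow> real" where
  "Psi1 \<phi> g H x =
     (2 * (\<phi> x - avg \<phi> \<phi>) + g x \<bullet> x - real CARD('n)) / sqrt (2 * real CARD('n))
     - x \<bullet> avg \<phi> (\<lambda>y. H y *v y) / sqrt (2 * real CARD('n))"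

definition Psi2 :: "(real^'n::finite \<Rightarrow> real) \<Rightarrow> real^'n \<Rightarrow> real" where
  "Psi2 \<phi> x = ((norm x)\<^sup>2 - avg \<phi> (\<lambda>y. (norm y)\<^sup>2)) / (2 * sqrt (2 * real CARD('n)))"

definition M_phi :: "(real^'n::finite \<Rightarrow> real) \<Rightarrow> (real^'n \<Rightarrow> real^'n) \<Rightarrow> real^'n^'n" where
  "M_phi \<phi> g = (\<chi> i j. avg \<phi> (\<lambda>x. Phi g x $ i * Phi g x $ j))"

definition alpha :: "(real^'n::finite \<Rightarrow> real) \<Rightarrow> (real^'n \<Rightarrow> real^'n) \<Rightarrow> (real^'n \<Rightarrow> real) \<Rightarrow> real^'n" where
  "alpha \<phi> g \<Psi> = (\<chi> i. avg \<phi> (\<lambda>x. \<Psi> x * Phi g x $ i))"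

definition Psi_tilde :: "(real^'n::finite \<Rightarrow> real) \<Rightarrow> (real^'n \<Rightarrow> real^'n) \<Rightarrow> (real^'n \<Rightarrow> real) \<Rightarrow> real^'n \<Rightarrow> real" where
  "Psi_tilde \<phi> g \<Psi> x = \<Psi> x - Phi g x \<bullet> (matrix_inv (M_phi \<phi> g) *v alpha \<phi> g \<Psi>)"

text \<open>Partial case: R^d = real^('k + 'm), where the first d_phi = CARD('k) coordinates
  are those indexed by Inl.\<close>
definition Phi_hat :: "(real^('k::finite + 'm::finite) \<Rightarrow> real^('k + 'm)) \<Rightarrow> real^('k + 'm) \<Rightarrow> real^'k" where
  "Phi_hat g x = (\<chi> i. Phi g x $ Inl i)"

definition M_hat :: "(real^('k::finite + 'm::finite) \<Rightarrow> real) \<Rightarrow> (real^('k + 'm) \<Rightarrow> real^('k + 'm)) \<Rightarrow> real^'k^'k" where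
  "M_hat \<phi> g = (\<chi> i j. avg \<phi> (\<lambda>x. Phi_hat g x $ i * Phi_hat g x $ j))"

definition alpha_hat :: "(real^('k::finite + 'm::finite) \<Rightarrow> real) \<Rightarrow> (real^('k + 'm) \<Rightarrow> real^('k + 'm)) \<Rightarrow> (real^('k + 'm) \<Rightarrow> real) \<Rightarrow> real^'k" where
  "alpha_hat \<phi> g \<Psi> = (\<chi> i. avg \<phi> (\<lambda>x. \<Psi> x * Phi_hat g x $ i))"

definition Psi_hat :: "(real^('k::finite + 'm::finite) \<Rightarrow> real) \<Rightarrow> (real^('k + 'm) \<Rightarrow> real^('k + 'm)) \<Rightarrow> (real^('k + 'm) \<Rightarrow> real) \<Rightarrow> real^('k + 'm) \<Rightarrow> real" where
  "Psi_hat \<phi> g \<Psi> x = \<Psi> x - (Phi_hat g x :: real^'k) \<bullet> (matrix_inv (M_hat \<phi> g) *v alpha_hat \<phi> g \<Psi>)"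

definition lin_indep2 :: "('a \<Rightarrow> real) \<Rightarrow> ('a \<Rightarrow> real) \<Rightarrow> bool" where
  "lin_indep2 f1 f2 \<longleftrightarrow> (\<forall>a b. (\<forall>x. a * f1 x + b * f2 x = 0) \<longrightarrow> a = 0 \<and> b = 0)"

end

theory Submission
  imports Defs
begin

(* Suppose a (Psi1 - Phi . m1) + b (Psi2 - Phi . m2) = 0; the correction terms of Psi_tilde and
   Psi_hat are of this form. If a <> 0, the relation says that 2 phi + grad phi . (x - p) is a
   quadratic polynomial for a suitable p; integrating Euler's identity along the rays from p shows
   that phi itself is quadratic, (H7) forces its Hessian to be the identity and the centring in (H3)
   puts its minimum at the origin, so Phi = 0, contradicting d_phi >= 1. If a = 0 and b <> 0, the
   derivative of phi in the direction m2 is x . m2 plus a nonconstant quadratic, so phi decreases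
   cubically along the ray through -m2 and exp (- phi) is not integrable, contradicting (H3). *)

lemma has_real_derivative_along_line:
  fixes \<phi> :: "'a::real_inner \<Rightarrow> real"
  assumes "\<And>x. (\<phi> has_derivative (\<lambda>h. g x \<bullet> h)) (at x)"
  shows "((\<lambda>t. \<phi> (p + t *\<^sub>R y)) has_real_derivative g (p + t *\<^sub>R y) \<bullet> y) (at t)"
proof -
  have "((\<lambda>t. p + t *\<^sub>R y) has_derivative (\<lambda>h. h *\<^sub>R y)) (at t)"
    by (auto intro!: derivative_eq_intros)
  from has_derivative_compose[OF this assms]
  show ?thesis
    unfolding has_field_derivative_def by (simp add: mult.commute[of _ "g (p + t *\<^sub>R y) \<bullet> y"])
qed

lemma Euler_identity_imp_quadratic:
  fixes \<phi> :: "'a::real_inner \<Rightarrow> real"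
  assumes D: "\<And>x. (\<phi> has_derivative (\<lambda>h. g x \<bullet> h)) (at x)"
    and Euler: "\<And>x. 2 * \<phi> x + g x \<bullet> (x - p) = \<alpha> * ((x - p) \<bullet> (x - p)) + (x - p) \<bullet> \<beta> + \<gamma>"
  shows "\<phi> x = \<alpha> / 4 * ((x - p) \<bullet> (x - p)) + (x - p) \<bullet> \<beta> / 3 + \<gamma> / 2"
proof -
  define y where "y = x - p"
  \<comment> \<open>Along the ray from \<open>p\<close> through \<open>x\<close>, Euler's identity says
    \<open>d/dt (t\<^sup>2 \<phi> (p + t y)) = t (\<alpha> t\<^sup>2 (y \<bullet> y) + t (y \<bullet> \<beta>) + \<gamma>)\<close>.\<close>
  define F where "F t = t\<^sup>2 * \<phi> (p + t *\<^sub>R y)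
      - (\<alpha> / 4 * t ^ 4 * (y \<bullet> y) + t ^ 3 * (y \<bullet> \<beta>) / 3 + t\<^sup>2 * \<gamma> / 2)" for t
  have "(F has_real_derivative t * (2 * \<phi> (p + t *\<^sub>R y) + g (p + t *\<^sub>R y) \<bullet> (t *\<^sub>R y)
      - (\<alpha> * ((t *\<^sub>R y) \<bullet> (t *\<^sub>R y)) + (t *\<^sub>R y) \<bullet> \<beta> + \<gamma>))) (at t)" for t
    unfolding F_def
    by (auto intro!: derivative_eq_intros has_real_derivative_along_line[OF D]
        simp: algebra_simps power2_eq_square power3_eq_cube eval_nat_numeral)
  moreover have "2 * \<phi> (p + t *\<^sub>R y) + g (p + t *\<^sub>R y) \<bullet> (t *\<^sub>R y)
      = \<alpha> * ((t *\<^sub>R y) \<bullet> (t *\<^sub>R y)) + (t *\<^sub>R y) \<bullet> \<beta> + \<gamma>" for t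
    using Euler[of "p + t *\<^sub>R y"] by simp
  ultimately have "(F has_real_derivative 0) (at t)" for t
    by simp
  then have "F 1 = F 0"
    using DERIV_isconst_all by blast
  then show ?thesis
    by (simp add: F_def y_def)
qed

lemma restriction_to_line_of_directional_gradient:
  fixes \<phi> :: "'a::real_inner \<Rightarrow> real"
  assumes D: "\<And>x. (\<phi> has_derivative (\<lambda>h. g x \<bullet> h)) (at x)"
    and gv: "\<And>x. g x \<bullet> v = x \<bullet> v + (x \<bullet> x - c) / k" and k: "k \<noteq> 0"
  shows "\<phi> (e + t *\<^sub>R v) = \<phi> e + t * (e \<bullet> v) + t\<^sup>2 * (v \<bullet> v) / 2
           + (t * (e \<bullet> e) + t\<^sup>2 * (e \<bullet> v) + t ^ 3 * (v \<bullet> v) / 3 - c * t) / k"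
proof -
  define F where "F t = \<phi> (e + t *\<^sub>R v) - (t * (e \<bullet> v) + t\<^sup>2 * (v \<bullet> v) / 2
      + (t * (e \<bullet> e) + t\<^sup>2 * (e \<bullet> v) + t ^ 3 * (v \<bullet> v) / 3 - c * t) / k)" for t
  have "(F has_real_derivative g (e + t *\<^sub>R v) \<bullet> v - ((e + t *\<^sub>R v) \<bullet> v
      + ((e + t *\<^sub>R v) \<bullet> (e + t *\<^sub>R v) - c) / k)) (at t)" for t
    unfolding F_def using k
    by (auto intro!: derivative_eq_intros has_real_derivative_along_line[OF D]
        simp: inner_add_left inner_add_right inner_commute power2_eq_square power3_eq_cube
          eval_nat_numeral field_simps)
  then have "(F has_real_derivative 0) (at t)" for t
    by (simp only: gv diff_self)
  then have "F t = F 0"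
    using DERIV_isconst_all by blast
  then show ?thesis
    by (simp add: F_def)
qed

lemma cubic_with_bounded_coefficients_nonpos:
  fixes a\<^sub>0 a\<^sub>1 a\<^sub>2 K L t :: real
  assumes "a\<^sub>0 \<le> K" "a\<^sub>1 \<le> K" "a\<^sub>2 \<le> K" "0 \<le> K" "1 \<le> t" "3 * K \<le> L * t"
  shows "a\<^sub>0 + a\<^sub>1 * t + a\<^sub>2 * t\<^sup>2 - L * t ^ 3 \<le> 0"
proof -
  have t2: "1 \<le> t\<^sup>2" "t \<le> t\<^sup>2"
    using assms(5) mult_mono[of 1 t 1 t] mult_left_mono[of 1 t t]
    by (simp_all add: power2_eq_square)
  have "a\<^sub>0 \<le> K * t\<^sup>2"
    using assms(1,4) t2 mult_left_mono[of 1 "t\<^sup>2" K] by simp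
  moreover have "a\<^sub>1 * t \<le> K * t\<^sup>2"
    using assms(2,4,5) t2 mult_right_mono[of a\<^sub>1 K t] mult_left_mono[of t "t\<^sup>2" K] by linarith
  moreover have "a\<^sub>2 * t\<^sup>2 \<le> K * t\<^sup>2"
    using assms(3) by (simp add: mult_right_mono)
  moreover have "3 * K * t\<^sup>2 \<le> L * t ^ 3"
    using assms(6) mult_right_mono[of "3 * K" "L * t" "t\<^sup>2"]
    by (simp add: power3_eq_cube power2_eq_square mult.assoc)
  ultimately show ?thesis
    by linarith
qed

lemma emeasure_Union_ball_progression:
  fixes a w :: "'a::euclidean_space"
  assumes r: "0 < r" and w: "2 * r \<le> norm w"
  shows "emeasure lborel (\<Union>n::nat. ball (a + real n *\<^sub>R w) r) = \<infinity>"
proof -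
  let ?B = "\<lambda>n::nat. ball (a + real n *\<^sub>R w) r"
  have "disjoint_family ?B"
    unfolding disjoint_family_on_def
  proof (intro ballI impI disjoint_ballI)
    fix m n :: nat
    assume "m \<noteq> n"
    then have "1 \<le> \<bar>real m - real n\<bar>"
      by linarith
    then have "2 * r \<le> \<bar>real m - real n\<bar> * norm w"
      using w mult_right_mono[of 1 "\<bar>real m - real n\<bar>" "norm w"] by simp
    also have "\<dots> = dist (a + real m *\<^sub>R w) (a + real n *\<^sub>R w)"
      by (simp add: dist_norm flip: scaleR_diff_left)
    finally show "r + r \<le> dist (a + real m *\<^sub>R w) (a + real n *\<^sub>R w)"
      by simp
  qed
  then have "emeasure lborel (\<Union>n. ?B n) = (\<Sum>n. emeasure lborel (?B n))"
    by (intro suminf_emeasure[symmetric]) auto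
  also have "\<dots> = (\<Sum>n::nat. ennreal (measure lborel (ball (0::'a) r)))"
  proof -
    have "emeasure lborel (ball c r) = ennreal (measure lborel (ball (0::'a) r))" for c :: 'a
      using emeasure_lborel_ball_finite[of c r] r
      by (simp add: emeasure_eq_ennreal_measure content_ball_conv_unit_ball[of r])
    then show ?thesis
      by simp
  qed
  also have "\<dots> = \<infinity>"
    unfolding infinity_ennreal_def
    using content_ball_pos[OF r, of 0]
    by (intro summable_iff_suminf_neq_top) (auto simp: summable_const_iff)
  finally show ?thesis .
qed

lemma emeasure_lt_top_if_integrable_ge_one:
  fixes f :: "'a \<Rightarrow> real"
  assumes "integrable M f" "S \<in> sets M" "\<And>x. x \<in> S \<Longrightarrow> 1 \<le> f x"
  shows "emeasure M S < \<infinity>"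
proof -
  have "emeasure M S = (\<integral>\<^sup>+x. indicator S x \<partial>M)"
    using assms(2) by simp
  also have "\<dots> \<le> (\<integral>\<^sup>+x. ennreal (norm (f x)) \<partial>M)"
    using assms(3)
    by (intro nn_integral_mono) (auto simp: indicator_def intro: order.trans[OF _ abs_ge_self])
  also have "\<dots> < \<infinity>"
    using assms(1) by (simp add: integrable_iff_bounded)
  finally show ?thesis .
qed

lemma nonpos_along_ray_of_directional_gradient:
  fixes \<phi> :: "'a::euclidean_space \<Rightarrow> real"
  assumes D: "\<And>x. (\<phi> has_derivative (\<lambda>h. g x \<bullet> h)) (at x)"
    and gv: "\<And>x. g x \<bullet> v = x \<bullet> v + (x \<bullet> x - c) / k" and k: "0 < k" and v: "v \<noteq> 0"
  obtains T where "\<And>e \<tau>. norm e \<le> 1 \<Longrightarrow> T \<le> \<tau> \<Longrightarrow> \<phi> (e - \<tau> *\<^sub>R v) \<le> 0"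
proof -
  have "continuous_on (cball 0 1) \<phi>"
    using D has_derivative_continuous continuous_at_imp_continuous_on by blast
  moreover have "cball (0::'a) 1 \<noteq> {}"
    by simp
  ultimately obtain M where M: "\<And>e. e \<in> cball 0 1 \<Longrightarrow> \<phi> e \<le> M"
    using continuous_attains_sup[OF compact_cball] by blast
  define K where "K = \<bar>M\<bar> + norm v + \<bar>c\<bar> / k + v \<bullet> v / 2 + norm v / k"
  define L where "L = v \<bullet> v / (3 * k)"
  have L: "0 < L"
    using k v by (simp add: L_def)
  have "\<phi> (e - \<tau> *\<^sub>R v) \<le> 0" if e: "norm e \<le> 1" and \<tau>: "max 1 (3 * K / L) \<le> \<tau>" for e \<tau>
  proof -
    have ev: "\<bar>e \<bullet> v\<bar> \<le> norm v"
      using Cauchy_Schwarz_ineq2[of e v] e mult_right_mono[of "norm e" 1 "norm v"] by simp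
    have "\<phi> (e - \<tau> *\<^sub>R v) = \<phi> e - \<tau> * (e \<bullet> v) + \<tau>\<^sup>2 * (v \<bullet> v) / 2
        + (- \<tau> * (e \<bullet> e) + \<tau>\<^sup>2 * (e \<bullet> v) - \<tau> ^ 3 * (v \<bullet> v) / 3 + c * \<tau>) / k"
      using restriction_to_line_of_directional_gradient[OF D gv, of e "- \<tau>"] k by simp
    also have "\<dots> = \<phi> e + (- (e \<bullet> v) - e \<bullet> e / k + c / k) * \<tau>
        + (v \<bullet> v / 2 + e \<bullet> v / k) * \<tau>\<^sup>2 - L * \<tau> ^ 3"
      using k by (simp add: L_def field_simps)
    also have "\<dots> \<le> 0"
    proof (rule cubic_with_bounded_coefficients_nonpos)
      have "0 \<le> \<bar>c\<bar> / k" "0 \<le> v \<bullet> v" "0 \<le> norm v / k" "c / k \<le> \<bar>c\<bar> / k"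
          "e \<bullet> v / k \<le> norm v / k" "0 \<le> e \<bullet> e / k"
        using k ev by (simp_all add: divide_right_mono)
      then show "\<phi> e \<le> K" "- (e \<bullet> v) - e \<bullet> e / k + c / k \<le> K"
          "v \<bullet> v / 2 + e \<bullet> v / k \<le> K" "0 \<le> K"
        unfolding K_def using M[of e] e ev norm_ge_zero[of v] abs_ge_self[of M] by (auto, linarith+)
      show "1 \<le> \<tau>" "3 * K \<le> L * \<tau>"
        using \<tau> L by (simp_all add: pos_divide_le_eq mult.commute)
    qed
    finally show ?thesis .
  qed
  then show ?thesis
    using that by blast
qed

lemma not_integrable_exp_neg_of_directional_gradient:
  fixes \<phi> :: "'a::euclidean_space \<Rightarrow> real"
  assumes D: "\<And>x. (\<phi> has_derivative (\<lambda>h. g x \<bullet> h)) (at x)"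
    and gv: "\<And>x. g x \<bullet> v = x \<bullet> v + (x \<bullet> x - c) / k" and k: "0 < k" and v: "v \<noteq> 0"
  shows "\<not> integrable lborel (\<lambda>x. exp (- \<phi> x))"
proof
  assume integrable: "integrable lborel (\<lambda>x. exp (- \<phi> x))"
  obtain T where nonpos: "\<And>e \<tau>. norm e \<le> 1 \<Longrightarrow> T \<le> \<tau> \<Longrightarrow> \<phi> (e - \<tau> *\<^sub>R v) \<le> 0"
    using nonpos_along_ray_of_directional_gradient[OF D gv k v] by blast
  define w where "w = - (2 / norm v) *\<^sub>R v"
  define S where "S = (\<Union>n::nat. ball (- T *\<^sub>R v + real n *\<^sub>R w) 1)"
  have "emeasure lborel S = \<infinity>"
    unfolding S_def using v by (intro emeasure_Union_ball_progression) (simp_all add: w_def)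
  moreover have "emeasure lborel S < \<infinity>"
  proof (rule emeasure_lt_top_if_integrable_ge_one[OF integrable])
    show "S \<in> sets lborel"
      by (simp add: S_def)
    fix x
    assume "x \<in> S"
    then obtain n :: nat where n: "x \<in> ball (- T *\<^sub>R v + real n *\<^sub>R w) 1"
      by (auto simp: S_def)
    define \<tau> where "\<tau> = T + 2 * real n / norm v"
    have "dist (- T *\<^sub>R v + real n *\<^sub>R w) x = norm (x + \<tau> *\<^sub>R v)"
      unfolding dist_norm \<tau>_def w_def by (subst norm_minus_commute) (simp add: algebra_simps)
    with n have "norm (x + \<tau> *\<^sub>R v) < 1" "T \<le> \<tau>"
      by (simp_all add: \<tau>_def)
    then have "\<phi> x \<le> 0"
      using nonpos[of "x + \<tau> *\<^sub>R v" \<tau>] by simp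
    then show "1 \<le> exp (- \<phi> x)"
      by simp
  qed
  ultimately show False
    by simp
qed

lemma mean_of_reflection_symmetric_density:
  fixes f :: "'a::euclidean_space \<Rightarrow> real"
  assumes mass: "has_bochner_integral lborel f 1"
    and mean: "has_bochner_integral lborel (\<lambda>x. f x *\<^sub>R x) m"
    and symmetric: "\<And>x. f (2 *\<^sub>R a - x) = f x"
  shows "m = a"
proof -
  define T where "T x = 2 *\<^sub>R a + (-1::real) *\<^sub>R x" for x :: 'a
  have lborel_T: "lborel = distr lborel borel T"
    using lborel_affine[of "-1::real" "2 *\<^sub>R a"] by (simp add: T_def[abs_def] density_1)
  have [measurable]: "T \<in> borel_measurable borel"
    unfolding T_def[abs_def] by measurable
  have [measurable]: "(\<lambda>x. f x *\<^sub>R x) \<in> borel_measurable borel"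
    using borel_measurable_has_bochner_integral[OF mean] by simp
  have "has_bochner_integral (distr lborel borel T) (\<lambda>x. f x *\<^sub>R x) m"
    using mean by (simp flip: lborel_T)
  then have "has_bochner_integral lborel (\<lambda>x. f (T x) *\<^sub>R T x) m"
    by (simp add: has_bochner_integral_iff integrable_distr_eq integral_distr)
  moreover have "f (T x) *\<^sub>R T x = f x *\<^sub>R (2 *\<^sub>R a) - f x *\<^sub>R x" for x
    using symmetric[of x] by (simp add: T_def algebra_simps)
  ultimately have "has_bochner_integral lborel (\<lambda>x. f x *\<^sub>R (2 *\<^sub>R a) - f x *\<^sub>R x) m"
    by simp
  moreover have "has_bochner_integral lborel (\<lambda>x. f x *\<^sub>R (2 *\<^sub>R a) - f x *\<^sub>R x) (1 *\<^sub>R (2 *\<^sub>R a) - m)"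
    by (intro has_bochner_integral_diff has_bochner_integral_scaleR_left mass mean)
  ultimately have "m = 1 *\<^sub>R (2 *\<^sub>R a) - m"
    by (rule has_bochner_integral_eq)
  then have "2 *\<^sub>R m = 2 *\<^sub>R a"
    by (simp add: algebra_simps scaleR_2)
  then show ?thesis
    by simp
qed

lemma gradient_unique:
  assumes "(f has_derivative (\<lambda>h. a \<bullet> h)) (at x)" "(f has_derivative (\<lambda>h. b \<bullet> h)) (at x)"
  shows "a = b"
  using has_derivative_unique[OF assms] vector_eq_rdot by metis

lemma scalar_Hessian_eq_one:
  fixes \<phi> :: "real^'n::finite \<Rightarrow> real"
  assumes H3: "H3 \<phi>" and H7: "H7 \<phi> H" and H: "\<And>x. H x = c *\<^sub>R mat 1"
  shows "c = 1"
proof -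
  have "has_bochner_integral lborel (\<lambda>x. rho \<phi> x *\<^sub>R H x) (1 *\<^sub>R (c *\<^sub>R mat 1))"
    using H3 unfolding H by (intro has_bochner_integral_scaleR_left) (simp add: H3_def)
  moreover have "has_bochner_integral lborel (\<lambda>x. rho \<phi> x *\<^sub>R H x) (mat 1)"
    using H7 by (simp add: H7_def)
  ultimately have "1 *\<^sub>R (c *\<^sub>R mat 1) = (mat 1 :: real^'n^'n)"
    by (rule has_bochner_integral_eq)
  then have "(c *\<^sub>R mat 1 :: real^'n^'n) $ i $ i = mat 1 $ i $ i" for i
    by simp
  then show ?thesis
    by (simp add: mat_def)
qed

lemma Gaussian_potential_centred:
  fixes \<phi> :: "real^'n::finite \<Rightarrow> real"
  assumes \<phi>: "\<And>x. \<phi> x = (x + c) \<bullet> (x + c) / 2 + \<kappa>" and H3: "H3 \<phi>"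
  shows "c = 0"
proof -
  have "rho \<phi> (2 *\<^sub>R (- c) - x) = rho \<phi> x" for x
  proof -
    have reflect: "2 *\<^sub>R (- c) - x + c = - (x + c)"
      by (simp add: algebra_simps scaleR_2)
    show ?thesis
      unfolding rho_def \<phi> reflect inner_minus_left inner_minus_right minus_minus ..
  qed
  then have "0 = - c"
    using H3 by (intro mean_of_reflection_symmetric_density[of "rho \<phi>"]) (auto simp: H3_def)
  then show ?thesis
    by simp
qed

lemma gradient_eq_id_of_Euler_identity:
  fixes \<phi> :: "real^'n::finite \<Rightarrow> real"
  assumes C2: "C2_with \<phi> g H" and H3: "H3 \<phi>" and H7: "H7 \<phi> H"
    and Euler: "\<And>x. 2 * \<phi> x + g x \<bullet> (x - p) = \<alpha> * ((x - p) \<bullet> (x - p)) + (x - p) \<bullet> \<beta> + \<gamma>"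
  shows "g x = x"
proof -
  have D: "\<And>x. (\<phi> has_derivative (\<lambda>h. g x \<bullet> h)) (at x)"
    and DH: "\<And>x. (g has_derivative (\<lambda>h. H x *v h)) (at x)"
    using C2 by (auto simp: C2_with_def)
  define G where "G x = (\<alpha> / 2) *\<^sub>R (x - p) + (1 / 3) *\<^sub>R \<beta>" for x
  have \<phi>: "\<phi> = (\<lambda>x. \<alpha> / 4 * ((x - p) \<bullet> (x - p)) + (x - p) \<bullet> \<beta> / 3 + \<gamma> / 2)"
    using Euler_identity_imp_quadratic[OF D Euler] by blast
  have "((\<lambda>x. \<alpha> / 4 * ((x - p) \<bullet> (x - p)) + (x - p) \<bullet> \<beta> / 3 + \<gamma> / 2)
      has_derivative (\<lambda>h. G x \<bullet> h)) (at x)" for x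
    unfolding G_def
    by (auto intro!: derivative_eq_intros simp: inner_add_left inner_commute algebra_simps)
  then have g: "g = G"
    using gradient_unique D unfolding \<phi> by blast
  have "(G has_derivative (\<lambda>h. (\<alpha> / 2) *\<^sub>R h)) (at x)" for x
    unfolding G_def by (auto intro!: derivative_eq_intros)
  then have "(\<lambda>h. H x *v h) = (\<lambda>h. ((\<alpha> / 2) *\<^sub>R mat 1 :: real^'n^'n) *v h)" for x
    using has_derivative_unique DH unfolding g
    by (metis matrix_vector_mul_lid scaleR_matrix_vector_assoc)
  then have "H x = (\<alpha> / 2) *\<^sub>R mat 1" for x
    by (metis matrix_eq)
  then have \<alpha>: "\<alpha> = 2"
    using scalar_Hessian_eq_one[OF H3 H7] by fastforce
  define c where "c = (1 / 3) *\<^sub>R \<beta> - p"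
  have "\<phi> x = (x + c) \<bullet> (x + c) / 2 + (\<gamma> / 2 - \<beta> \<bullet> \<beta> / 18)" for x
  proof -
    have "x + c = (x - p) + (1 / 3) *\<^sub>R \<beta>"
      by (simp add: c_def algebra_simps)
    then have "(x + c) \<bullet> (x + c) = (x - p) \<bullet> (x - p) + 2 / 3 * ((x - p) \<bullet> \<beta>) + \<beta> \<bullet> \<beta> / 9"
      by (simp only: inner_add_left inner_add_right inner_scaleR_left inner_scaleR_right
          inner_commute[of \<beta> "x - p"]) (simp add: field_simps)
    then show ?thesis
      unfolding \<phi> \<alpha> by (simp add: field_simps)
  qed
  then have "c = 0"
    using Gaussian_potential_centred H3 by blast
  then show ?thesis
    by (simp add: g G_def \<alpha> c_def algebra_simps)
qed

lemma gradient_eq_id_of_dependence: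
  fixes \<phi> :: "real^'n::finite \<Rightarrow> real"
  assumes C2: "C2_with \<phi> g H" and H3: "H3 \<phi>" and H7: "H7 \<phi> H" and a: "a \<noteq> 0"
    and dependent: "\<And>x. a * (Psi1 \<phi> g H x - Phi g x \<bullet> m\<^sub>1) + b * (Psi2 \<phi> x - Phi g x \<bullet> m\<^sub>2) = 0"
  shows "g x = x"
proof -
  define s where "s = sqrt (2 * real CARD('n))"
  define c\<^sub>1 where "c\<^sub>1 = avg \<phi> \<phi>"
  define c\<^sub>2 where "c\<^sub>2 = avg \<phi> (\<lambda>y. (norm y)\<^sup>2)"
  define w where "w = avg \<phi> (\<lambda>y. H y *v y)"
  define d where "d = real CARD('n)"
  \<comment> \<open>Multiplied by \<open>s / a\<close>, the relation is Euler's identity at \<open>p\<close> with these constants.\<close>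
  define \<alpha> where "\<alpha> = - b / (2 * a)"
  define p where "p = s *\<^sub>R m\<^sub>1 + (s * b / a) *\<^sub>R m\<^sub>2"
  have s: "0 < s"
    by (simp add: s_def)
  have "a * ((2 * (\<phi> x - c\<^sub>1) + g x \<bullet> x - d) / s - x \<bullet> w / s - (g x - x) \<bullet> m\<^sub>1)
      + b * ((x \<bullet> x - c\<^sub>2) / (2 * s) - (g x - x) \<bullet> m\<^sub>2) = 0" for x
    using dependent[of x]
    by (simp only: Psi1_def Psi2_def Phi_def s_def c\<^sub>1_def c\<^sub>2_def w_def d_def power2_norm_eq_inner)
  moreover have "2 * \<phi> x + g x \<bullet> (x - p) - (\<alpha> * (x \<bullet> x) + x \<bullet> (w - p) + (2 * c\<^sub>1 + d - \<alpha> * c\<^sub>2))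
      = (s / a) * (a * ((2 * (\<phi> x - c\<^sub>1) + g x \<bullet> x - d) / s - x \<bullet> w / s - (g x - x) \<bullet> m\<^sub>1)
        + b * ((x \<bullet> x - c\<^sub>2) / (2 * s) - (g x - x) \<bullet> m\<^sub>2))" for x
    using a s by (simp add: \<alpha>_def p_def inner_diff_left inner_diff_right inner_add_right field_simps)
  moreover have "\<alpha> * (x \<bullet> x) + x \<bullet> (w - p) + c = \<alpha> * ((x - p) \<bullet> (x - p))
      + (x - p) \<bullet> ((2 * \<alpha>) *\<^sub>R p + w - p) + (c + \<alpha> * (p \<bullet> p) + p \<bullet> (w - p))" for x c
    by (simp add: inner_diff_left inner_diff_right inner_add_left inner_add_right inner_commute
        algebra_simps)
  ultimately have "2 * \<phi> x + g x \<bullet> (x - p) = \<alpha> * ((x - p) \<bullet> (x - p))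
      + (x - p) \<bullet> ((2 * \<alpha>) *\<^sub>R p + w - p) + (2 * c\<^sub>1 + d - \<alpha> * c\<^sub>2 + \<alpha> * (p \<bullet> p) + p \<bullet> (w - p))" for x
    by (metis eq_iff_diff_eq_0 mult_zero_right)
  then show ?thesis
    using gradient_eq_id_of_Euler_identity[OF C2 H3 H7] by blast
qed

lemma Psi2_minus_Phi_nonzero:
  fixes \<phi> :: "real^'n::finite \<Rightarrow> real"
  assumes D: "\<And>x. (\<phi> has_derivative (\<lambda>h. g x \<bullet> h)) (at x)" and H3: "H3 \<phi>"
  shows "\<exists>x. Psi2 \<phi> x - Phi g x \<bullet> m \<noteq> 0"
proof (rule ccontr)
  define s where "s = sqrt (2 * real CARD('n))"
  define c where "c = avg \<phi> (\<lambda>y. (norm y)\<^sup>2)"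
  have s: "0 < s"
    by (simp add: s_def)
  assume "\<not> (\<exists>x. Psi2 \<phi> x - Phi g x \<bullet> m \<noteq> 0)"
  then have gm: "g x \<bullet> m = x \<bullet> m + (x \<bullet> x - c) / (2 * s)" for x
    by (simp add: Psi2_def Phi_def s_def c_def power2_norm_eq_inner inner_diff_left)
  show False
  proof (cases "m = 0")
    case True
    then have "x \<bullet> x = c" for x :: "real^'n"
      using gm[of x] s by simp
    from this[of 0] this[of "axis undefined 1"] show False
      by simp
  next
    case False
    have "integrable lborel (\<lambda>x. exp (- \<phi> x))"
      using H3 by (auto simp: H3_def rho_def[abs_def] intro: integrable.intros)
    moreover have "\<not> integrable lborel (\<lambda>x. exp (- \<phi> x))"
      using s False by (intro not_integrable_exp_neg_of_directional_gradient[OF D gm]) simp_all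
    ultimately show False
      by contradiction
  qed
qed

lemma lin_indep2_Psi_minus_Phi:
  fixes \<phi> :: "real^'n::finite \<Rightarrow> real"
  assumes C2: "C2_with \<phi> g H" and H3: "H3 \<phi>" and H7: "H7 \<phi> H"
    and Phi_nonzero: "\<exists>x. Phi g x \<noteq> 0"
  shows "lin_indep2 (\<lambda>x. Psi1 \<phi> g H x - Phi g x \<bullet> m\<^sub>1) (\<lambda>x. Psi2 \<phi> x - Phi g x \<bullet> m\<^sub>2)"
  unfolding lin_indep2_def
proof (intro allI impI)
  fix a b
  assume dependent: "\<forall>x. a * (Psi1 \<phi> g H x - Phi g x \<bullet> m\<^sub>1) + b * (Psi2 \<phi> x - Phi g x \<bullet> m\<^sub>2) = 0"
  have "a = 0"
  proof (rule ccontr)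
    assume "a \<noteq> 0"
    then have "g x = x" for x
      using gradient_eq_id_of_dependence[OF C2 H3 H7] dependent by blast
    with Phi_nonzero show False
      by (simp add: Phi_def)
  qed
  moreover obtain x where "Psi2 \<phi> x - Phi g x \<bullet> m\<^sub>2 \<noteq> 0"
    using Psi2_minus_Phi_nonzero C2 H3 unfolding C2_with_def by blast
  ultimately show "a = 0 \<and> b = 0"
    using dependent by auto
qed

lemma ex_Phi_nonzero:
  assumes "E_phi g \<noteq> {0}"
  shows "\<exists>x. Phi g x \<noteq> 0"
proof (rule ccontr)
  assume "\<not> (\<exists>x. Phi g x \<noteq> 0)"
  then have "range (Phi g) = {0}"
    by auto
  with assms show False
    by (simp add: E_phi_def)
qed

lemma inner_restrict_Inl:
  fixes v :: "real^('k::finite + 'm::finite)" and u :: "real^'k"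
  shows "(\<chi> i. v $ Inl i) \<bullet> u = v \<bullet> (\<chi> j. case j of Inl i \<Rightarrow> u $ i | Inr _ \<Rightarrow> 0)"
  unfolding inner_vec_def UNIV_Plus_UNIV[symmetric]
  by (simp add: sum.Plus comp_def del: UNIV_Plus_UNIV)

theorem lemmaA3:
  shows "(\<forall>(\<phi> :: real^'n::finite \<Rightarrow> real) g H.
            hyps \<phi> g H \<and> d_phi g = CARD('n) \<longrightarrow>
            lin_indep2 (Psi_tilde \<phi> g (Psi1 \<phi> g H)) (Psi_tilde \<phi> g (Psi2 \<phi>)))
       \<and> (\<forall>(\<phi> :: real^('k::finite + 'm::finite) \<Rightarrow> real) g H.
            hyps \<phi> g H \<and> E_phi g = span (range (\<lambda>i::'k. axis (Inl i) 1)) \<longrightarrow>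
            lin_indep2 (Psi_hat \<phi> g (Psi1 \<phi> g H)) (Psi_hat \<phi> g (Psi2 \<phi>)))"
proof (intro conjI allI impI)
  fix \<phi> :: "real^'n::finite \<Rightarrow> real" and g H
  assume A: "hyps \<phi> g H \<and> d_phi g = CARD('n)"
  have "E_phi g \<noteq> {0}"
  proof
    assume "E_phi g = {0}"
    then have "d_phi g = 0"
      by (simp add: d_phi_def)
    with A show False
      by simp
  qed
  then have "\<exists>x. Phi g x \<noteq> 0"
    by (rule ex_Phi_nonzero)
  with A show "lin_indep2 (Psi_tilde \<phi> g (Psi1 \<phi> g H)) (Psi_tilde \<phi> g (Psi2 \<phi>))"
    unfolding Psi_tilde_def hyps_def by (blast intro: lin_indep2_Psi_minus_Phi)
next
  fix \<phi> :: "real^('k::finite + 'm::finite) \<Rightarrow> real" and g H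
  assume A: "hyps \<phi> g H \<and> E_phi g = span (range (\<lambda>i::'k. axis (Inl i) 1))"
  then have "axis (Inl undefined) 1 \<in> E_phi g"
    by (simp add: span_base)
  then have "E_phi g \<noteq> {0}"
    by (metis axis_eq_0_iff singletonD zero_neq_one)
  then have "\<exists>x. Phi g x \<noteq> 0"
    by (rule ex_Phi_nonzero)
  with A show "lin_indep2 (Psi_hat \<phi> g (Psi1 \<phi> g H)) (Psi_hat \<phi> g (Psi2 \<phi>))"
    unfolding Psi_hat_def Phi_hat_def inner_restrict_Inl hyps_def
    by (blast intro: lin_indep2_Psi_minus_Phi)
qed

end
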